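(* Let $\Phi$ be a root system of type $A_r$ with the usual numbering of simple roots, and let $j$ be an integer with $1\le j\le \frac{r+1}{2}$. Then $$v_j(\Phi)=v_{r+1-j}(\Phi)\ge j\max(1,\log r-\log j),$$ where $\log$ is the natural logarithm.
   Context: For a reduced irreducible root system $\Phi$ with simple roots $\alpha_1,\ldots,\alpha_r$, write each positive root as $\beta=\sum_{j=1}^r a_{\beta,j}\alpha_j$ with non-negative integers $a_{\beta,j}$, and set $v_j(\Phi)=\sum_{\beta\in\Phi^+}\frac{a_{\beta,j}}{\sum_{k=1}^r a_{\beta,k}}$. For type $A_r$ with usual numbering, the positive roots are $\alpha_i+\cdots+\alpha_k$, $1\le i\le k\le r$. *)

theory Defs
  imports Complex_Main
begin

text \<open>A positive root of a root system of rank r with simple roots alpha_1..alpha_r is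
represented by its coefficient vector m \<mapsto> a_{beta,m} (m = 1..r).\<close>

definition v_index :: "nat \<Rightarrow> (nat \<Rightarrow> nat) set \<Rightarrow> nat \<Rightarrow> real" where
  "v_index r Pos j = (\<Sum>\<beta>\<in>Pos. real (\<beta> j) / real (\<Sum>k=1..r. \<beta> k))"

definition pos_roots_A :: "nat \<Rightarrow> (nat \<Rightarrow> nat) set" where
  "pos_roots_A r = {(\<lambda>m. if i \<le> m \<and> m \<le> k then 1 else 0) | i k. 1 \<le> i \<and> i \<le> k \<and> k \<le> r}"

end

theory Submission
  imports Defs
begin

text \<open>The root \<open>\<alpha>\<^sub>i + \<dots> + \<alpha>\<^sub>k\<close> has height \<open>k + 1 - i\<close>, so \<open>v\<^sub>j\<close> is the sum of
  \<open>1/(k + 1 - i)\<close> over \<open>1 \<le> i \<le> j \<le> k \<le> r\<close>, and the diagram involution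
  \<open>(i, k) \<mapsto> (r + 1 - k, r + 1 - i)\<close> gives the symmetry. For fixed \<open>i\<close> the inner sum is the
  harmonic block \<open>1/(j + 1 - i) + \<dots> + 1/(r + 1 - i)\<close>, which comparison with \<open>ln\<close> bounds
  below by \<open>ln (r/j)\<close>. Alternatively, as \<open>2j \<le> r + 1\<close>, every block contains
  \<open>1/(j + 1 - i) + \<dots> + 1/j\<close>, and these truncated blocks sum to exactly \<open>j\<close> because
  \<open>1/L\<close> occurs in \<open>L\<close> of them.\<close>

definition interval_root :: "nat \<Rightarrow> nat \<Rightarrow> nat \<Rightarrow> nat" where
  "interval_root i k m = (if i \<le> m \<and> m \<le> k then 1 else 0)"

lemma pos_roots_A_eq_image:
  "pos_roots_A r = (\<lambda>(i, k). interval_root i k) ` {(i, k). 1 \<le> i \<and> i \<le> k \<and> k \<le> r}"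
  unfolding pos_roots_A_def interval_root_def by (auto simp: image_iff)

lemma interval_root_support: "{m. interval_root i k m = 1} = {i..k}"
  by (auto simp: interval_root_def)

lemma inj_on_interval_root: "inj_on (\<lambda>(i, k). interval_root i k) {(i, k). i \<le> k}"
proof (rule inj_onI, clarsimp)
  fix i k i' k' :: nat
  assume "i \<le> k" "i' \<le> k'" "interval_root i k = interval_root i' k'"
  then show "i = i' \<and> k = k'"
    using interval_root_support[of i k] interval_root_support[of i' k'] by simp
qed

lemma sum_interval_root:
  assumes "1 \<le> i" "k \<le> r"
  shows "(\<Sum>m=1..r. interval_root i k m) = k + 1 - i"
proof -
  have "(\<Sum>m=1..r. interval_root i k m) = card ({1..r} \<inter> {i..k})"
    by (simp add: interval_root_def sum.If_cases Int_def)
  also have "{1..r} \<inter> {i..k} = {i..k}" using assms by auto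
  finally show ?thesis by simp
qed

lemma v_index_pos_roots_A:
  "v_index r (pos_roots_A r) j =
     (\<Sum>(i, k)\<in>{(i, k). 1 \<le> i \<and> i \<le> j \<and> j \<le> k \<and> k \<le> r}. 1 / real (k + 1 - i))"
proof -
  let ?P = "{(i, k). 1 \<le> i \<and> i \<le> k \<and> k \<le> r}"
  have "v_index r (pos_roots_A r) j =
      (\<Sum>(i, k)\<in>?P. real (interval_root i k j) / real (k + 1 - i))"
    unfolding v_index_def pos_roots_A_eq_image
  proof (subst sum.reindex)
    show "inj_on (\<lambda>(i, k). interval_root i k) ?P"
      by (rule inj_on_subset[OF inj_on_interval_root]) auto
  qed (auto simp: sum_interval_root[simplified] simp del: of_nat_sum intro!: sum.cong)
  also have "\<dots> = (\<Sum>(i, k)\<in>{(i, k). 1 \<le> i \<and> i \<le> j \<and> j \<le> k \<and> k \<le> r}. 1 / real (k + 1 - i))"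
    by (rule sum.mono_neutral_cong_right)
       (auto simp: interval_root_def split: if_splits intro: finite_subset[of _ "{..r} \<times> {..r}"])
  finally show ?thesis .
qed

lemma v_index_A_symmetric:
  assumes "j \<le> r"
  shows "v_index r (pos_roots_A r) (r + 1 - j) = v_index r (pos_roots_A r) j"
  unfolding v_index_pos_roots_A
  by (rule sum.reindex_bij_witness[where i="\<lambda>(i, k). (r + 1 - k, r + 1 - i)"
                                     and j="\<lambda>(i, k). (r + 1 - k, r + 1 - i)"])
     (use assms in auto)

lemma v_index_A_harmonic_blocks:
  "v_index r (pos_roots_A r) j = (\<Sum>i=1..j. \<Sum>L=j+1-i..r+1-i. 1 / real L)"
proof -
  have "{(i, k). 1 \<le> i \<and> i \<le> j \<and> j \<le> k \<and> k \<le> r} = {1..j} \<times> {j..r}"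
    by auto
  then have "v_index r (pos_roots_A r) j = (\<Sum>i=1..j. \<Sum>k=j..r. 1 / real (k + 1 - i))"
    by (simp only: v_index_pos_roots_A sum.cartesian_product)
  also have "\<dots> = (\<Sum>i=1..j. \<Sum>L=j+1-i..r+1-i. 1 / real L)"
  proof (rule sum.cong[OF refl])
    fix i assume "i \<in> {1..j}"
    then show "(\<Sum>k=j..r. 1 / real (k + 1 - i)) = (\<Sum>L=j+1-i..r+1-i. 1 / real L)"
      by (intro sum.reindex_bij_witness[where i="\<lambda>L. L + i - 1" and j="\<lambda>k. k + 1 - i"]) auto
  qed
  finally show ?thesis .
qed

lemma ln_le_sum_inverse:
  assumes "0 < a"
  shows "ln (real (b + 1) / real a) \<le> (\<Sum>L=a..b. 1 / real L)"
proof (induction b)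
  case 0
  then show ?case using assms by (simp add: ln_div)
next
  case (Suc b)
  show ?case
  proof (cases "a \<le> Suc b")
    case True
    have "ln (real (Suc b + 1) / real a)
        = ln (real (b + 1) / real a) + ln (real (Suc b + 1) / real (Suc b))"
      using assms by (simp add: ln_div)
    also have "ln (real (Suc b + 1) / real (Suc b)) \<le> 1 / real (Suc b)"
      using ln_le_minus_one[of "real (Suc b + 1) / real (Suc b)"] by (simp add: field_simps)
    finally show ?thesis
      using Suc.IH True by (simp add: atLeastAtMostSuc_conv)
  next
    case False
    then have "ln (real (Suc b + 1) / real a) \<le> 0" by simp
    also have "0 \<le> (\<Sum>L=a..Suc b. 1 / real L)" by (intro sum_nonneg) simp
    finally show ?thesis .
  qed
qed

lemma sum_harmonic_tails: "(\<Sum>m=1..n. \<Sum>L=m..n. 1 / real L) = real n"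
proof (induction n)
  case 0
  then show ?case by simp
next
  case (Suc n)
  have "(\<Sum>m=1..Suc n. \<Sum>L=m..Suc n. 1 / real L)
      = (\<Sum>m=1..Suc n. (\<Sum>L=m..n. 1 / real L) + 1 / real (Suc n))"
    by (intro sum.cong refl) (auto simp: atLeastAtMostSuc_conv)
  also have "\<dots> = (\<Sum>m=1..n. \<Sum>L=m..n. 1 / real L) + 1"
    by (simp add: sum.distrib)
  finally show ?case using Suc.IH by simp
qed

lemma v_index_A_ge_index:
  assumes "2 * j \<le> r + 1"
  shows "real j \<le> v_index r (pos_roots_A r) j"
proof -
  have "real j = (\<Sum>i=1..j. \<Sum>L=j+1-i..j. 1 / real L)"
  proof -
    have "(\<Sum>i=1..j. \<Sum>L=j+1-i..j. 1 / real L) = (\<Sum>m=1..j. \<Sum>L=m..j. 1 / real L)"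
      by (rule sum.reindex_bij_witness[where i="\<lambda>m. j + 1 - m" and j="\<lambda>i. j + 1 - i"]) auto
    then show ?thesis using sum_harmonic_tails[of j] by simp
  qed
  also have "\<dots> \<le> (\<Sum>i=1..j. \<Sum>L=j+1-i..r+1-i. 1 / real L)"
    using assms by (intro sum_mono sum_mono2) auto
  finally show ?thesis by (simp add: v_index_A_harmonic_blocks)
qed

lemma log_ratio_le_block_ratio:
  assumes "1 \<le> i" "i \<le> j" "j \<le> r"
  shows "ln (real r / real j) \<le> ln (real (r + 2 - i) / real (j + 1 - i))"
proof -
  have "real j * real (r + 2 - i) - real r * real (j + 1 - i) = (real r - real j) * (real i - 1) + real j"
    using assms by (simp add: of_nat_diff algebra_simps)
  also have "\<dots> \<ge> 0" using assms by simp
  finally have "real r / real j \<le> real (r + 2 - i) / real (j + 1 - i)"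
    using assms by (simp add: divide_simps mult.commute)
  then show ?thesis using assms by simp
qed

lemma v_index_A_ge_log:
  assumes "1 \<le> j" "j \<le> r"
  shows "real j * (ln (real r) - ln (real j)) \<le> v_index r (pos_roots_A r) j"
proof -
  have "real j * (ln (real r) - ln (real j)) = (\<Sum>i=1..j. ln (real r / real j))"
    using assms by (simp add: ln_div)
  also have "\<dots> \<le> (\<Sum>i=1..j. ln (real (r + 2 - i) / real (j + 1 - i)))"
    using assms by (intro sum_mono log_ratio_le_block_ratio) auto
  also have "\<dots> \<le> (\<Sum>i=1..j. \<Sum>L=j+1-i..r+1-i. 1 / real L)"
  proof (intro sum_mono)
    fix i assume "i \<in> {1..j}"
    then show "ln (real (r + 2 - i) / real (j + 1 - i)) \<le> (\<Sum>L=j+1-i..r+1-i. 1 / real L)"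
      using ln_le_sum_inverse[of "j + 1 - i" "r + 1 - i"] assms by (simp add: Suc_diff_le)
  qed
  finally show ?thesis by (simp add: v_index_A_harmonic_blocks)
qed

theorem lemma2p2:
  fixes r j :: nat
  assumes "1 \<le> j" and "2 * j \<le> r + 1"
  shows "v_index r (pos_roots_A r) j = v_index r (pos_roots_A r) (r + 1 - j)
       \<and> v_index r (pos_roots_A r) j \<ge> real j * max 1 (ln (real r) - ln (real j))"
proof -
  have "j \<le> r" using assms by simp
  then have "real j * max 1 (ln (real r) - ln (real j)) \<le> v_index r (pos_roots_A r) j"
    using v_index_A_ge_index[OF assms(2)] v_index_A_ge_log[OF assms(1)] by (simp add: max_def)
  then show ?thesis using v_index_A_symmetric[OF \<open>j \<le> r\<close>] by simp
qed

end
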